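(* Let $P$ be a set of primes and let $T$ be a map with $\mathcal O_T=s_P$. Let $k\ge1$ and write its prime decomposition as $k=\prod_{p\in P}p^{a_p}\cdot\prod_{p\in Q}p^{a_p}$, where $Q$ is the set of primes dividing $k$ that are not in $P$ (so $P\cap Q=\emptyset$). Then for every $n\ge1$, \[ \mathcal O_{T^k}(n)=\begin{cases}\displaystyle\prod_{p\in Q,\,p\mid n}p^{a_p}\cdot\prod_{p\in Q,\,p\nmid n}\sigma(p^{a_p}) & \text{if } p\nmid n \text{ for all } p\in P,\\[2mm] 0 & \text{if } p\mid n \text{ for some } p\in P,\end{cases} \] where $\sigma$ is the sum-of-divisors function.
   Context: For a map $T:X\to X$, $\mathcal O_T(n)$ denotes the number of closed orbits of length $n$ under $T$ (sets $\{x,Tx,\dots,T^{n-1}x\}$ with $T^nx=x$ of cardinality exactly $n$); $T^k$ is the $k$th iterate. For a set $P$ of primes, $s_P$ is the sequence with $s_P(n)=0$ if $p\mid n$ for some $p\in P$, and $s_P(n)=1$ otherwise. *)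

theory Defs
  imports Main "HOL-Computational_Algebra.Primes"
begin

definition orbit_seg :: "('a \<Rightarrow> 'a) \<Rightarrow> nat \<Rightarrow> 'a \<Rightarrow> 'a set" where
  "orbit_seg T n x = (\<lambda>i. (T ^^ i) x) ` {..<n}"

definition closed_orbits :: "('a \<Rightarrow> 'a) \<Rightarrow> nat \<Rightarrow> 'a set set" where
  "closed_orbits T n = {orbit_seg T n x | x. (T ^^ n) x = x \<and> card (orbit_seg T n x) = n}"

text \<open>Number of closed orbits of length n (meaningful when the set is finite).\<close>
definition num_orbits :: "('a \<Rightarrow> 'a) \<Rightarrow> nat \<Rightarrow> nat" where
  "num_orbits T n = card (closed_orbits T n)"

definition s_seq :: "nat set \<Rightarrow> nat \<Rightarrow> nat" where
  "s_seq P n = (if \<exists>p\<in>P. p dvd n then 0 else 1)"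

definition divisor_sum :: "nat \<Rightarrow> nat" where
  "divisor_sum m = (\<Sum>d\<in>{d. d dvd m}. d)"

end

theory Submission
  imports Defs
begin

text \<open>
  A point has least period n under T^k iff its least period under T is m = n g with g dividing k
  and gcd(n, k/g) = 1, since the least period of T^k at a point of T-period m is m / gcd(m, k).
  Every closed orbit of length m consists of m points of least period m, so
  n O_{T^k}(n) = sum_g n g s_P(n g) = n s_P(n) sum_g g s_P(g), s_P being multiplicative.
  The remaining divisor sum factors over the primes q dividing k: if q^a exactly divides k, the
  admissible exponents b of q in g are b = 0 for q in P, b = a when q divides n (so that q does
  not divide gcd(n, k/g)), and all b \<le> a otherwise, giving the local factors 1, q^a and sigma(q^a).
\<close>

definition least_period :: "('a \<Rightarrow> 'a) \<Rightarrow> nat \<Rightarrow> 'a \<Rightarrow> bool" where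
  "least_period f m x \<longleftrightarrow> 0 < m \<and> (f ^^ m) x = x \<and> (\<forall>j. 0 < j \<and> j < m \<longrightarrow> (f ^^ j) x \<noteq> x)"

definition periodic_points :: "('a \<Rightarrow> 'a) \<Rightarrow> nat \<Rightarrow> 'a set" where
  "periodic_points f m = {x. least_period f m x}"

lemma least_period_dvd_iff:
  assumes "least_period f m x"
  shows "(f ^^ j) x = x \<longleftrightarrow> m dvd j"
proof -
  have "(f ^^ j) x = (f ^^ (j mod m)) x" and "0 < m"
    using assms funpow_mod_eq[where f=f and n=m and x=x and m=j] by (auto simp: least_period_def)
  then show ?thesis
    using assms by (auto simp: least_period_def dvd_eq_mod_eq_0)
qed

lemma least_periodI:
  assumes "0 < m" and "\<And>j. (f ^^ j) x = x \<longleftrightarrow> m dvd j"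
  shows "least_period f m x"
  using assms unfolding least_period_def by (auto dest: dvd_imp_le)

lemma least_period_unique: "least_period f m x \<Longrightarrow> least_period f m' x \<Longrightarrow> m = m'"
  by (metis dvd_antisym dvd_refl least_period_dvd_iff)

lemma least_period_exists:
  assumes "0 < n" and "(f ^^ n) x = x"
  obtains m where "least_period f m x"
proof
  let ?m = "LEAST j. 0 < j \<and> (f ^^ j) x = x"
  have "0 < ?m \<and> (f ^^ ?m) x = x"
    by (rule LeastI[of _ n]) (use assms in auto)
  then show "least_period f ?m x"
    unfolding least_period_def using not_less_Least by blast
qed

lemma least_period_funpow:
  assumes x: "least_period f m x" and "0 < k"
  shows "least_period (f ^^ k) (m div gcd m k) x"
proof -
  have "gcd m k \<noteq> 0" using \<open>0 < k\<close> by simp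
  then obtain m' k' where mk: "m = m' * gcd m k" "k = k' * gcd m k" "coprime m' k'"
    using gcd_coprime_exists by blast
  then have "m div gcd m k = m'"
    by (metis \<open>gcd m k \<noteq> 0\<close> nonzero_mult_div_cancel_right)
  moreover have "0 < m'" using x mk(1) by (auto simp: least_period_def)
  moreover have "((f ^^ k) ^^ j) x = x \<longleftrightarrow> m' dvd j" for j
  proof -
    have "((f ^^ k) ^^ j) x = x \<longleftrightarrow> m' * gcd m k dvd (k' * j) * gcd m k"
      using least_period_dvd_iff[OF x, of "k * j"] mk by (simp add: funpow_mult ac_simps)
    also have "\<dots> \<longleftrightarrow> m' dvd j"
      using \<open>gcd m k \<noteq> 0\<close> \<open>coprime m' k'\<close> by (simp add: coprime_dvd_mult_right_iff)
    finally show ?thesis .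
  qed
  ultimately show ?thesis by (simp add: least_periodI)
qed

lemma funpow_apply_commute: "(f ^^ a) ((f ^^ b) x) = (f ^^ b) ((f ^^ a) x)"
  by (simp flip: comp_apply[of "f ^^ a"] comp_apply[of "f ^^ b"] funpow_add add: add.commute)

lemma funpow_return:
  assumes "0 < m" and "(f ^^ m) x = x"
  shows "(f ^^ (m - i mod m)) ((f ^^ i) x) = x"
proof -
  have "(f ^^ (m - i mod m)) ((f ^^ i) x) = (f ^^ (m - i mod m)) ((f ^^ (i mod m)) x)"
    using assms(2) funpow_mod_eq[where f=f and n=m and x=x and m=i] by simp
  also have "\<dots> = (f ^^ (m - i mod m + i mod m)) x"
    by (simp add: funpow_add)
  finally show ?thesis
    using assms by (simp add: less_imp_le)
qed

lemma least_period_orbit_point: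
  assumes x: "least_period f m x"
  shows "least_period f m ((f ^^ i) x)"
proof (rule least_periodI)
  show "0 < m" using x by (simp add: least_period_def)
  let ?g = "f ^^ (m - i mod m)"
  have return: "?g ((f ^^ i) x) = x"
    using x by (simp add: least_period_def funpow_return)
  fix j
  have "(f ^^ j) ((f ^^ i) x) = (f ^^ i) x \<longleftrightarrow> (f ^^ j) x = x"
  proof
    assume "(f ^^ j) ((f ^^ i) x) = (f ^^ i) x"
    then have "?g ((f ^^ i) ((f ^^ j) x)) = x"
      using return by (simp add: funpow_apply_commute)
    then show "(f ^^ j) x = x"
      using return by (metis funpow_apply_commute)
  qed (simp add: funpow_apply_commute)
  then show "(f ^^ j) ((f ^^ i) x) = (f ^^ i) x \<longleftrightarrow> m dvd j"
    using least_period_dvd_iff[OF x] by simp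
qed

lemma orbit_seg_eq_range:
  assumes "0 < m" and "(f ^^ m) x = x"
  shows "orbit_seg f m x = range (\<lambda>j. (f ^^ j) x)"
  unfolding orbit_seg_def using assms funpow_mod_eq[where f=f and n=m and x=x]
  by (auto intro!: image_eqI[where x = "_ mod m"])

lemma orbit_seg_orbit_point:
  assumes x: "least_period f m x"
  shows "orbit_seg f m ((f ^^ i) x) = orbit_seg f m x"
proof -
  have m: "0 < m" "(f ^^ m) x = x" and y: "(f ^^ m) ((f ^^ i) x) = (f ^^ i) x"
    using x least_period_orbit_point[OF x, of i] by (simp_all add: least_period_def)
  have "range (\<lambda>j. (f ^^ j) ((f ^^ i) x)) = range (\<lambda>j. (f ^^ j) x)"
  proof (intro equalityI subsetI)
    fix z assume "z \<in> range (\<lambda>j. (f ^^ j) ((f ^^ i) x))"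
    then show "z \<in> range (\<lambda>j. (f ^^ j) x)"
      by (auto simp flip: comp_apply[of "f ^^ _"] funpow_add)
  next
    fix z assume "z \<in> range (\<lambda>j. (f ^^ j) x)"
    then obtain j where "z = (f ^^ j) ((f ^^ (m - i mod m)) ((f ^^ i) x))"
      using funpow_return[OF m] by auto
    then have "z = (f ^^ (j + (m - i mod m))) ((f ^^ i) x)"
      by (simp add: funpow_add)
    then show "z \<in> range (\<lambda>j. (f ^^ j) ((f ^^ i) x))"
      by blast
  qed
  then show ?thesis
    using m y by (simp add: orbit_seg_eq_range)
qed

lemma closed_orbit_iff_least_period:
  assumes "0 < m"
  shows "(f ^^ m) x = x \<and> card (orbit_seg f m x) = m \<longleftrightarrow> least_period f m x"
proof
  assume closed: "(f ^^ m) x = x \<and> card (orbit_seg f m x) = m"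
  have "(f ^^ j) x \<noteq> x" if "0 < j" "j < m" for j
  proof
    assume "(f ^^ j) x = x"
    then have "orbit_seg f m x = orbit_seg f j x"
      using closed \<open>0 < m\<close> \<open>0 < j\<close> by (simp add: orbit_seg_eq_range)
    then have "card (orbit_seg f m x) \<le> j"
      unfolding orbit_seg_def by (metis card_image_le card_lessThan finite_lessThan)
    then show False
      using closed \<open>j < m\<close> by simp
  qed
  then show "least_period f m x"
    using closed \<open>0 < m\<close> by (simp add: least_period_def)
next
  assume "least_period f m x"
  then have "inj_on (\<lambda>i. (f ^^ i) x) {..<m}"
    using inj_on_funpow_least[where f=f and n=m and s=x] by (simp add: least_period_def lessThan_atLeast0)
  then show "(f ^^ m) x = x \<and> card (orbit_seg f m x) = m"
    using \<open>least_period f m x\<close> by (simp add: orbit_seg_def card_image least_period_def)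
qed

lemma closed_orbits_eq_image:
  "0 < m \<Longrightarrow> closed_orbits f m = orbit_seg f m ` periodic_points f m"
  by (auto simp: closed_orbits_def periodic_points_def closed_orbit_iff_least_period)

lemma periodic_points_eq_Union:
  assumes "0 < m"
  shows "periodic_points f m = \<Union> (closed_orbits f m)"
proof -
  have "x \<in> orbit_seg f m x" for x
    using assms by (force simp: orbit_seg_def)
  moreover have "least_period f m y" if "least_period f m x" "y \<in> orbit_seg f m x" for x y
    using that least_period_orbit_point by (auto simp: orbit_seg_def)
  ultimately show ?thesis
    using assms by (auto simp: closed_orbits_eq_image periodic_points_def)
qed

lemma closed_orbits_disjoint:
  assumes "0 < m"
  shows "pairwise disjnt (closed_orbits f m)"
proof (rule pairwiseI)
  fix A B assume "A \<in> closed_orbits f m" "B \<in> closed_orbits f m" "A \<noteq> B"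
  then obtain x x' where x: "least_period f m x" "A = orbit_seg f m x"
    and x': "least_period f m x'" "B = orbit_seg f m x'"
    using assms by (auto simp: closed_orbits_eq_image periodic_points_def)
  show "disjnt A B"
  proof (rule ccontr)
    assume "\<not> disjnt A B"
    then obtain i i' where "(f ^^ i) x = (f ^^ i') x'"
      using x x' by (auto simp: disjnt_def orbit_seg_def)
    then show False
      using orbit_seg_orbit_point[OF x(1), of i] orbit_seg_orbit_point[OF x'(1), of i'] x x' \<open>A \<noteq> B\<close>
      by simp
  qed
qed

lemma
  assumes "0 < m"
  shows finite_periodic_points_iff: "finite (periodic_points f m) \<longleftrightarrow> finite (closed_orbits f m)"
    and card_periodic_points:
      "finite (closed_orbits f m) \<Longrightarrow> card (periodic_points f m) = m * num_orbits f m"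
proof -
  have orbit: "finite A \<and> card A = m" if "A \<in> closed_orbits f m" for A
    using that assms by (auto simp: closed_orbits_def orbit_seg_def)
  show "finite (periodic_points f m) \<longleftrightarrow> finite (closed_orbits f m)"
  proof
    show "finite (periodic_points f m) \<Longrightarrow> finite (closed_orbits f m)"
      using assms by (simp add: closed_orbits_eq_image)
    show "finite (closed_orbits f m) \<Longrightarrow> finite (periodic_points f m)"
      using orbit assms by (simp add: periodic_points_eq_Union)
  qed
  assume "finite (closed_orbits f m)"
  then have "card (periodic_points f m) = (\<Sum>A\<in>closed_orbits f m. card A)"
    unfolding periodic_points_eq_Union[OF assms]
    by (intro card_Union_disjoint closed_orbits_disjoint assms) (use orbit in auto)
  also have "\<dots> = m * num_orbits f m"
    using orbit by (simp add: num_orbits_def)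
  finally show "card (periodic_points f m) = m * num_orbits f m" .
qed

lemma div_gcd_eq_iff:
  fixes m n k :: nat
  assumes "0 < k" and "0 < n"
  shows "m div gcd m k = n \<longleftrightarrow> (\<exists>g. g dvd k \<and> coprime n (k div g) \<and> m = n * g)"
proof
  assume m: "m div gcd m k = n"
  define g where "g = gcd m k"
  obtain r where r: "k = g * r"
    unfolding g_def by (metis dvdE gcd_dvd2)
  have "0 < g" using assms by (simp add: g_def)
  have mg: "m = n * g"
    using m unfolding g_def by (metis dvd_div_mult_self gcd_dvd1 mult.commute)
  have "g * gcd n r = gcd (n * g) (g * r)"
    by (simp add: gcd_mult_distrib_nat ac_simps)
  also have "\<dots> = gcd m k"
    using mg r by simp
  also have "\<dots> = g"
    by (simp add: g_def)
  finally have "g * gcd n r = g" .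
  then have "coprime n (k div g)"
    using r \<open>0 < g\<close> by (simp add: coprime_iff_gcd_eq_1)
  then show "\<exists>g. g dvd k \<and> coprime n (k div g) \<and> m = n * g"
    using mg r by (intro exI[of _ g]) auto
next
  assume "\<exists>g. g dvd k \<and> coprime n (k div g) \<and> m = n * g"
  then obtain g r where g: "k = g * r" "coprime n r" "m = n * g"
    by (metis dvd_div_mult_self mult.commute)
  then have "0 < g" using assms by auto
  have "gcd m k = g"
    using g by (simp add: gcd_mult_distrib_nat[symmetric] mult.commute coprime_iff_gcd_eq_1)
  then show "m div gcd m k = n"
    using g \<open>0 < g\<close> by simp
qed

lemma periodic_points_funpow:
  assumes "0 < k" and "0 < n"
  shows "periodic_points (f ^^ k) n =
    (\<Union>g\<in>{g. g dvd k \<and> coprime n (k div g)}. periodic_points f (n * g))"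
proof (intro equalityI subsetI)
  fix x assume "x \<in> periodic_points (f ^^ k) n"
  then have x: "least_period (f ^^ k) n x"
    by (simp add: periodic_points_def)
  then have "0 < k * n" and "(f ^^ (k * n)) x = x"
    using assms by (simp_all add: least_period_def funpow_mult)
  then obtain m where m: "least_period f m x"
    by (rule least_period_exists)
  have "m div gcd m k = n"
    by (rule least_period_unique[OF least_period_funpow[OF m \<open>0 < k\<close>] x])
  then show "x \<in> (\<Union>g\<in>{g. g dvd k \<and> coprime n (k div g)}. periodic_points f (n * g))"
    using m assms by (auto simp: div_gcd_eq_iff periodic_points_def)
next
  fix x assume "x \<in> (\<Union>g\<in>{g. g dvd k \<and> coprime n (k div g)}. periodic_points f (n * g))"
  then obtain g where "g dvd k" "coprime n (k div g)" "least_period f (n * g) x"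
    by (auto simp: periodic_points_def)
  moreover have "(n * g) div gcd (n * g) k = n"
    using calculation assms by (auto simp: div_gcd_eq_iff)
  ultimately show "x \<in> periodic_points (f ^^ k) n"
    using least_period_funpow[of f "n * g" x k] assms by (simp add: periodic_points_def)
qed

lemma card_periodic_points_funpow:
  assumes "0 < k" and "0 < n" and fin: "\<And>g. g dvd k \<Longrightarrow> finite (periodic_points f (n * g))"
  shows "finite (periodic_points (f ^^ k) n)"
    and "card (periodic_points (f ^^ k) n) =
      (\<Sum>g | g dvd k \<and> coprime n (k div g). card (periodic_points f (n * g)))"
proof -
  let ?D = "{g. g dvd k \<and> coprime n (k div g)}"
  have "finite ?D"
    using \<open>0 < k\<close> by (auto intro: finite_subset[of _ "{..k}"] dvd_imp_le)
  moreover have "periodic_points f (n * g) \<inter> periodic_points f (n * g') = {}" if "g \<noteq> g'" for g g'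
    using that \<open>0 < n\<close> least_period_unique[of f "n * g" _ "n * g'"] by (auto simp: periodic_points_def)
  ultimately show "finite (periodic_points (f ^^ k) n)"
    and "card (periodic_points (f ^^ k) n) = (\<Sum>g\<in>?D. card (periodic_points f (n * g)))"
    using fin by (simp_all add: periodic_points_funpow[OF assms(1,2)] card_UN_disjoint)
qed

lemma divisor_sum_prime_power:
  assumes "prime (p::nat)"
  shows "divisor_sum (p ^ a) = (\<Sum>b\<le>a. p ^ b)"
proof -
  have "{d. d dvd p ^ a} = power p ` {..a}"
    using divides_primepow_nat[OF assms] by auto
  moreover have "inj_on (power p) {..a}"
    using assms by (intro inj_onI) (metis power_inject_exp prime_gt_1_nat)
  ultimately show ?thesis
    unfolding divisor_sum_def by (simp add: sum.reindex)
qed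

lemma s_seq_mult:
  assumes "\<forall>p\<in>P. prime p"
  shows "s_seq P (m * n) = s_seq P m * s_seq P n"
  using assms by (auto simp: s_seq_def prime_dvd_mult_iff)

text \<open>The quotients g = m / n for the T-periods m lying over the T^k-period n (cf. div_gcd_eq_iff),
  restricted to those with s_P(g) = 1.\<close>

definition admissible_divisors :: "nat set \<Rightarrow> nat \<Rightarrow> nat \<Rightarrow> nat set" where
  "admissible_divisors P n k = {g. g dvd k \<and> coprime n (k div g) \<and> (\<forall>p\<in>P. \<not> p dvd g)}"

text \<open>The exponents of p in the admissible divisors of p^a k for p not dividing k.\<close>

definition local_exponents :: "nat set \<Rightarrow> nat \<Rightarrow> nat \<Rightarrow> nat \<Rightarrow> nat set" where
  "local_exponents P n p a = {b. b \<le> a \<and> (p \<in> P \<longrightarrow> b = 0) \<and> coprime n (p ^ (a - b))}"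

lemma divisors_prime_power_mult:
  fixes p k :: nat
  assumes p: "prime p" and "\<not> p dvd k"
  shows "bij_betw (\<lambda>(b, h). p ^ b * h) ({..a} \<times> {h. h dvd k}) {g. g dvd p ^ a * k}"
proof (rule bij_betw_imageI)
  show "inj_on (\<lambda>(b, h). p ^ b * h) ({..a} \<times> {h. h dvd k})"
  proof (rule inj_onI, clarsimp)
    fix b c h h' assume h: "h dvd k" "h' dvd k" and eq: "p ^ b * h = p ^ c * h'"
    have "\<not> p dvd h" "\<not> p dvd h'"
      using h \<open>\<not> p dvd k\<close> dvd_trans by blast+
    then have "multiplicity p (p ^ b * h) = b" "multiplicity p (p ^ c * h') = c"
      using p by (simp_all add: multiplicity_decomposeI[OF refl])
    then have "b = c" using eq by simp
    then show "b = c \<and> h = h'"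
      using eq p by (simp add: prime_gt_0_nat)
  qed
  show "(\<lambda>(b, h). p ^ b * h) ` ({..a} \<times> {h. h dvd k}) = {g. g dvd p ^ a * k}"
  proof (intro equalityI subsetI)
    fix g assume "g \<in> {g. g dvd p ^ a * k}"
    then obtain u v where "g = u * v" "u dvd p ^ a" "v dvd k"
      using division_decomp by blast
    then show "g \<in> (\<lambda>(b, h). p ^ b * h) ` ({..a} \<times> {h. h dvd k})"
      using divides_primepow_nat[OF p] by fastforce
  qed (auto intro: mult_dvd_mono le_imp_power_dvd)
qed

lemma admissible_divisors_prime_power_mult:
  fixes p k :: nat
  assumes P: "\<forall>q\<in>P. prime q" and p: "prime p" and "\<not> p dvd k"
  shows "bij_betw (\<lambda>(b, h). p ^ b * h) (local_exponents P n p a \<times> admissible_divisors P n k)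
           (admissible_divisors P n (p ^ a * k))"
proof -
  define good where
    "good g \<longleftrightarrow> coprime n (p ^ a * k div g) \<and> (\<forall>q\<in>P. \<not> q dvd g)" for g
  define good_pair where
    "good_pair bh \<longleftrightarrow> (case bh of (b, h) \<Rightarrow> (p \<in> P \<longrightarrow> b = 0) \<and> coprime n (p ^ (a - b)) \<and>
       coprime n (k div h) \<and> (\<forall>q\<in>P. \<not> q dvd h))" for bh
  have good_iff: "good (p ^ b * h) \<longleftrightarrow> good_pair (b, h)" if "b \<le> a" "h dvd k" for b h
  proof -
    have "p ^ a * k div (p ^ b * h) = p ^ (a - b) * (k div h)"
      using that p by (auto simp: le_imp_power_dvd power_diff div_mult_div_if_dvd prime_gt_0_nat)
    moreover have "q dvd p ^ b \<longleftrightarrow> q = p \<and> b \<noteq> 0" if "prime q" for q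
      using that p prime_dvd_power_iff[OF that] primes_dvd_imp_eq[OF that p]
      by (cases "b = 0") auto
    ultimately show ?thesis
      using P by (auto simp: good_def good_pair_def prime_dvd_mult_iff)
  qed
  have "bij_betw (\<lambda>(b, h). p ^ b * h)
      {bh \<in> {..a} \<times> {h. h dvd k}. good_pair bh} {g \<in> {g. g dvd p ^ a * k}. good g}"
    by (rule bij_betw_Collect[OF divisors_prime_power_mult[OF p \<open>\<not> p dvd k\<close>]])
      (clarsimp simp: good_iff)
  moreover have "local_exponents P n p a \<times> admissible_divisors P n k =
      {bh \<in> {..a} \<times> {h. h dvd k}. good_pair bh}"
    by (auto simp: admissible_divisors_def local_exponents_def good_pair_def)
  moreover have "admissible_divisors P n (p ^ a * k) = {g \<in> {g. g dvd p ^ a * k}. good g}"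
    by (auto simp: admissible_divisors_def good_def)
  ultimately show ?thesis
    by simp
qed

lemma sum_admissible_divisors_prime_power_mult:
  fixes p k :: nat
  assumes "\<forall>q\<in>P. prime q" and "prime p" and "\<not> p dvd k"
  shows "\<Sum>(admissible_divisors P n (p ^ a * k)) =
    (\<Sum>b\<in>local_exponents P n p a. p ^ b) * \<Sum>(admissible_divisors P n k)"
proof -
  have "\<Sum>(admissible_divisors P n (p ^ a * k)) =
      (\<Sum>x\<in>local_exponents P n p a \<times> admissible_divisors P n k. p ^ fst x * snd x)"
    using sum.reindex_bij_betw[OF admissible_divisors_prime_power_mult[OF assms], of id]
    by (simp add: case_prod_beta)
  then show ?thesis
    by (simp add: sum_product sum.cartesian_product case_prod_beta)
qed

lemma prime_divisors_prime_power_mult: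
  fixes p k :: nat
  assumes "prime p" and "\<not> p dvd k" and "0 < a"
  shows "{q. prime q \<and> q dvd p ^ a * k} = insert p {q. prime q \<and> q dvd k}"
  using assms by (auto simp: prime_dvd_mult_iff prime_dvd_power_iff dest: primes_dvd_imp_eq)

lemma multiplicity_prime_power_mult_other:
  fixes p q k :: nat
  assumes "prime p" and "prime q" and "q \<noteq> p" and "k \<noteq> 0"
  shows "multiplicity q (p ^ a * k) = multiplicity q k"
proof -
  have "multiplicity q (p ^ a) = 0"
    using assms by (simp add: prime_elem_multiplicity_power_distrib prime_multiplicity_other)
  then show ?thesis
    using assms by (simp add: prime_elem_multiplicity_mult_distrib prime_gt_0_nat)
qed

lemma sum_admissible_divisors:
  fixes k :: nat
  assumes P: "\<forall>q\<in>P. prime q" and "k \<noteq> 0"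
  shows "\<Sum>(admissible_divisors P n k) =
    (\<Prod>q\<in>{q. prime q \<and> q dvd k}. \<Sum>b\<in>local_exponents P n q (multiplicity q k). q ^ b)"
  using \<open>k \<noteq> 0\<close>
proof (induction k rule: less_induct)
  case (less k)
  show ?case
  proof (cases "k = 1")
    case True
    then have "admissible_divisors P n k = {1}" and "{q. prime q \<and> q dvd k} = {}"
      using P by (auto simp: admissible_divisors_def)
    then show ?thesis
      by (simp only: prod.empty) simp
  next
    case False
    then obtain p where p: "prime p" "p dvd k"
      using prime_factor_nat by blast
    define a where "a = multiplicity p k"
    obtain k' where k': "k = p ^ a * k'" "\<not> p dvd k'"
      using less.prems p(1) unfolding a_def by (metis multiplicity_decompose' not_prime_unit)
    have "0 < a"
      using p less.prems by (simp add: a_def prime_multiplicity_gt_zero_iff)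
    then have "k' < k" "k' \<noteq> 0"
      using k' less.prems p one_less_power[OF prime_gt_1_nat[OF p(1)] \<open>0 < a\<close>] by auto
    have primes: "{q. prime q \<and> q dvd k} = insert p {q. prime q \<and> q dvd k'}"
      using prime_divisors_prime_power_mult[OF p(1) k'(2) \<open>0 < a\<close>] k'(1) by simp
    have multiplicity_eq: "multiplicity q k = multiplicity q k'" if "prime q" "q dvd k'" for q
      using multiplicity_prime_power_mult_other[OF p(1) that(1) _ \<open>k' \<noteq> 0\<close>] that k' by auto
    have "finite {q. prime q \<and> q dvd k'}"
      using \<open>k' \<noteq> 0\<close> by (auto intro: finite_subset[of _ "{..k'}"] dvd_imp_le)
    then have "(\<Prod>q\<in>{q. prime q \<and> q dvd k}. \<Sum>b\<in>local_exponents P n q (multiplicity q k). q ^ b) =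
        (\<Sum>b\<in>local_exponents P n p a. p ^ b) *
        (\<Prod>q\<in>{q. prime q \<and> q dvd k'}. \<Sum>b\<in>local_exponents P n q (multiplicity q k). q ^ b)"
      using k'(2) by (simp add: primes a_def)
    also have "\<dots> = (\<Sum>b\<in>local_exponents P n p a. p ^ b) *
        (\<Prod>q\<in>{q. prime q \<and> q dvd k'}. \<Sum>b\<in>local_exponents P n q (multiplicity q k'). q ^ b)"
      using multiplicity_eq by (intro arg_cong[where f = "(*) _"] prod.cong) auto
    also have "\<dots> = \<Sum>(admissible_divisors P n k)"
      using less.IH[OF \<open>k' < k\<close> \<open>k' \<noteq> 0\<close>] k'
        sum_admissible_divisors_prime_power_mult[OF P p(1) k'(2)] by simp
    finally show ?thesis ..
  qed
qed

lemma sum_local_exponents: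
  fixes p :: nat
  assumes "prime p" and "\<not> (p \<in> P \<and> p dvd n)"
  shows "(\<Sum>b\<in>local_exponents P n p a. p ^ b) =
    (if p \<in> P then 1 else if p dvd n then p ^ a else divisor_sum (p ^ a))"
proof -
  have coprime_iff: "coprime n p \<longleftrightarrow> \<not> p dvd n"
    using assms(1) prime_imp_coprime[of p n] not_prime_unit coprime_common_divisor
    by (auto simp: coprime_commute)
  consider "p \<in> P" | "p \<notin> P" "p dvd n" | "p \<notin> P" "\<not> p dvd n"
    by blast
  then show ?thesis
  proof cases
    case 1
    then have "local_exponents P n p a = {0}"
      using assms by (auto simp: local_exponents_def coprime_iff)
    then show ?thesis using 1 by simp
  next
    case 2
    then have "local_exponents P n p a = {a}"
      by (auto simp: local_exponents_def coprime_iff)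
    then show ?thesis using 2 by simp
  next
    case 3
    then have "local_exponents P n p a = {..a}"
      by (auto simp: local_exponents_def coprime_iff)
    then show ?thesis using 3 assms(1) by (simp add: divisor_sum_prime_power)
  qed
qed

lemma sum_admissible_divisors_eq_prod:
  fixes k :: nat
  assumes P: "\<forall>q\<in>P. prime q" and "k \<noteq> 0" and n: "\<forall>p\<in>P. \<not> p dvd n"
  shows "\<Sum>(admissible_divisors P n k) =
    (\<Prod>p\<in>{p. prime p \<and> p dvd k \<and> p \<notin> P \<and> p dvd n}. p ^ multiplicity p k) *
    (\<Prod>p\<in>{p. prime p \<and> p dvd k \<and> p \<notin> P \<and> \<not> p dvd n}. divisor_sum (p ^ multiplicity p k))"
proof -
  let ?A = "{q. prime q \<and> q dvd k}"
  have "finite ?A"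
    using \<open>k \<noteq> 0\<close> by (auto intro: finite_subset[of _ "{..k}"] dvd_imp_le)
  have "\<Sum>(admissible_divisors P n k) = (\<Prod>q\<in>?A. if q \<in> P then 1 else
      if q dvd n then q ^ multiplicity q k else divisor_sum (q ^ multiplicity q k))"
    unfolding sum_admissible_divisors[OF P \<open>k \<noteq> 0\<close>] using n
    by (intro prod.cong) (auto simp: sum_local_exponents)
  also have "\<dots> = (\<Prod>q\<in>?A \<inter> -P.
      if q dvd n then q ^ multiplicity q k else divisor_sum (q ^ multiplicity q k))"
    using \<open>finite ?A\<close> by (simp add: prod.If_cases)
  also have "\<dots> = (\<Prod>q\<in>?A \<inter> -P \<inter> {q. q dvd n}. q ^ multiplicity q k) *
      (\<Prod>q\<in>?A \<inter> -P \<inter> -{q. q dvd n}. divisor_sum (q ^ multiplicity q k))"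
    using \<open>finite ?A\<close> by (simp add: prod.If_cases)
  also have "?A \<inter> -P \<inter> {q. q dvd n} = {p. prime p \<and> p dvd k \<and> p \<notin> P \<and> p dvd n}"
    by auto
  also have "?A \<inter> -P \<inter> -{q. q dvd n} = {p. prime p \<and> p dvd k \<and> p \<notin> P \<and> \<not> p dvd n}"
    by auto
  finally show ?thesis .
qed

lemma sum_coprime_codivisors_s_seq:
  fixes k n :: nat
  assumes P: "\<forall>p\<in>P. prime p" and "k \<noteq> 0"
  shows "(\<Sum>g | g dvd k \<and> coprime n (k div g). n * g * s_seq P (n * g)) =
    n * s_seq P n * \<Sum>(admissible_divisors P n k)"
proof -
  let ?D = "{g. g dvd k \<and> coprime n (k div g)}"
  have "finite ?D"
    using \<open>k \<noteq> 0\<close> by (auto intro: finite_subset[of _ "{..k}"] dvd_imp_le)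
  have "(\<Sum>g\<in>?D. n * g * s_seq P (n * g)) = n * s_seq P n * (\<Sum>g\<in>?D. g * s_seq P g)"
    using P by (simp add: s_seq_mult sum_distrib_left ac_simps)
  also have "(\<Sum>g\<in>?D. g * s_seq P g) = (\<Sum>g\<in>?D. if \<forall>p\<in>P. \<not> p dvd g then g else 0)"
    by (intro sum.cong) (auto simp: s_seq_def)
  also have "\<dots> = \<Sum>(admissible_divisors P n k)"
    using \<open>finite ?D\<close> by (simp add: sum.inter_filter[symmetric] admissible_divisors_def conj_assoc)
  finally show ?thesis .
qed

theorem lemma3p2:
  fixes T :: "'a \<Rightarrow> 'a" and P :: "nat set" and k n :: nat
  assumes P_primes: "\<forall>p\<in>P. prime p"
    and orbits: "\<forall>m\<ge>1. finite (closed_orbits T m) \<and> num_orbits T m = s_seq P m"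
    and k: "k \<ge> 1" and n: "n \<ge> 1"
  shows "finite (closed_orbits (T ^^ k) n) \<and>
    num_orbits (T ^^ k) n =
      (if \<forall>p\<in>P. \<not> p dvd n then
         (\<Prod>p\<in>{p. prime p \<and> p dvd k \<and> p \<notin> P \<and> p dvd n}. p ^ multiplicity p k) *
         (\<Prod>p\<in>{p. prime p \<and> p dvd k \<and> p \<notin> P \<and> \<not> p dvd n}. divisor_sum (p ^ multiplicity p k))
       else 0)"
proof -
  have "0 < k" "0 < n" using k n by auto
  have T: "finite (periodic_points T (n * g)) \<and> card (periodic_points T (n * g)) = n * g * s_seq P (n * g)"
    if "g dvd k" for g
    using that orbits \<open>0 < k\<close> \<open>0 < n\<close>
    by (auto simp: finite_periodic_points_iff card_periodic_points intro: Nat.gr0I)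
  have "finite (periodic_points (T ^^ k) n)"
    using card_periodic_points_funpow(1)[OF \<open>0 < k\<close> \<open>0 < n\<close>] T by blast
  then have fin: "finite (closed_orbits (T ^^ k) n)"
    using finite_periodic_points_iff[OF \<open>0 < n\<close>] by blast
  have "n * num_orbits (T ^^ k) n = card (periodic_points (T ^^ k) n)"
    using card_periodic_points[OF \<open>0 < n\<close> fin] by simp
  also have "\<dots> = (\<Sum>g | g dvd k \<and> coprime n (k div g). card (periodic_points T (n * g)))"
    using card_periodic_points_funpow(2)[OF \<open>0 < k\<close> \<open>0 < n\<close>] T by blast
  also have "\<dots> = (\<Sum>g | g dvd k \<and> coprime n (k div g). n * g * s_seq P (n * g))"
    using T by (intro sum.cong) auto
  also have "\<dots> = n * s_seq P n * \<Sum>(admissible_divisors P n k)"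
    using P_primes \<open>0 < k\<close> by (simp add: sum_coprime_codivisors_s_seq)
  finally have "num_orbits (T ^^ k) n = s_seq P n * \<Sum>(admissible_divisors P n k)"
    using \<open>0 < n\<close> by simp
  then show ?thesis
    using fin P_primes \<open>0 < k\<close> by (simp add: s_seq_def sum_admissible_divisors_eq_prod)
qed

end
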